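(* Consider the Heartbeat-Bound Hierarchical Credentials (HBHC) protocol with heartbeat interval $\Delta_h>0$, maximum heartbeat age $W_{\max}>0$, and maximum clock skew $\epsilon \ge 0$ between the parent agent and any verifier. Then the zombie window satisfies $W_z \le W_{\max} + \Delta_h + \epsilon$.
   Context: HBHC setting. Agents form a rooted delegation tree. A parent agent $A_p$ holds a heartbeat signing key pair $(hsk_p, hpk_p)$ (ECDSA); a child $A_c$ holds its own identity key pair $(sk_c, pk_c)$ and a credential $cred_c$ containing $pk_c$, an identifier $id_c$, and a binding value $hb\_binding_c = H(hpk_p \| id_c)$, where $H$ is SHA-256. Heartbeat generation: while not revoked, at time $t$ (by the parent's clock) the parent computes $epoch = \lfloor t/\Delta_h\rfloor$, $commitment = H(hpk_p \| epoch)$, $\sigma_h = \mathrm{Sign}(hsk_p, commitment)$, and distributes $(epoch, commitment, \sigma_h, hpk_p)$ every $\Delta_h$ seconds. Authentication: given a verifier challenge $c$ and a heartbeat, the child outputs the proof $(cred_c, epoch, \sigma_h, \sigma_c)$ with $\sigma_c = \mathrm{Sign}(sk_c, c\|epoch\|\sigma_h)$. Verification: a verifier holding a cached $hpk_p$, the challenge $c$, and local clock reading $t$ computes $current\_epoch = \lfloor t/\Delta_h \rfloor$ and accepts iff (i) $current\_epoch - epoch \le W_{\max}/\Delta_h$, (ii) $\sigma_h$ is a valid signature under $hpk_p$ on $H(hpk_p\|epoch)$, (iii) $cred_c.hb\_binding = H(hpk_p \| cred_c.id)$, and (iv) $\sigma_c$ is a valid signature under $cred_c.pk_c$ on $c\|epoch\|\sigma_h$.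 Revocation of $A_p$ at true time $t_r$ means the parent generates no heartbeats after $t_r$. Clock skew: a verifier's local clock reads $t+\delta$ at true time $t$ with $|\delta|\le\epsilon$. Adversary: a computationally bounded Dolev–Yao network adversary who may compromise non-root agents' software but cannot break ECDSA/SHA-256 and cannot extract $hsk_p$ (held in a secure enclave), hence cannot produce valid heartbeat signatures for epochs not signed by the parent. Zombie window: $W_z = \sup\{t - t_r : A_p \text{ revoked at } t_r \text{ and a child } A_c \text{ of } A_p \text{ authenticates successfully (is accepted by a verifier) at time } t\}$. *)

theory Defs
  imports "HOL-Library.Extended_Real"
begin

text \<open>Parameters:
  Dh  : heartbeat interval, Wmax : maximum heartbeat age,
  Vf  : signature verification (ECDSA) Vf pk msg sig,
  commit : the commitment H(hpk || epoch),
  hpk : the parent's heartbeat public key cached by the verifier,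
  child_ok p e sh : checks (iii) and (iv) on the child's part p of the proof
        (credential, challenge, child signature) for epoch e and heartbeat sig sh.\<close>

definition epoch_of :: "real \<Rightarrow> real \<Rightarrow> int" where
  "epoch_of Dh t = \<lfloor>t / Dh\<rfloor>"

definition hbhc_accepts ::
  "real \<Rightarrow> real \<Rightarrow> ('k \<Rightarrow> 'm \<Rightarrow> 's \<Rightarrow> bool) \<Rightarrow> ('k \<Rightarrow> int \<Rightarrow> 'm) \<Rightarrow> 'k
   \<Rightarrow> ('p \<Rightarrow> int \<Rightarrow> 's \<Rightarrow> bool) \<Rightarrow> real \<Rightarrow> 'p \<Rightarrow> int \<Rightarrow> 's \<Rightarrow> bool" where
  "hbhc_accepts Dh Wmax Vf commit hpk child_ok t_loc p e sh \<longleftrightarrow>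
     real_of_int (epoch_of Dh t_loc - e) \<le> Wmax / Dh
     \<and> Vf hpk (commit hpk e) sh
     \<and> child_ok p e sh"

text \<open>True times t at which some child proof is accepted by some verifier whose
  local clock reads t + delta with |delta| \<le> eps.\<close>
definition accepted_times ::
  "real \<Rightarrow> real \<Rightarrow> real \<Rightarrow> ('k \<Rightarrow> 'm \<Rightarrow> 's \<Rightarrow> bool) \<Rightarrow> ('k \<Rightarrow> int \<Rightarrow> 'm) \<Rightarrow> 'k
   \<Rightarrow> ('p \<Rightarrow> int \<Rightarrow> 's \<Rightarrow> bool) \<Rightarrow> real set" where
  "accepted_times Dh Wmax eps Vf commit hpk child_ok =
     {t. \<exists>delta p e sh. \<bar>delta\<bar> \<le> eps \<and>
          hbhc_accepts Dh Wmax Vf commit hpk child_ok (t + delta) p e sh}"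

text \<open>Zombie window: supremum (in the extended reals, so the empty sup is -\<infinity>)
  of t - t_r over successful authentication times t.\<close>
definition zombie_window ::
  "real \<Rightarrow> real \<Rightarrow> real \<Rightarrow> ('k \<Rightarrow> 'm \<Rightarrow> 's \<Rightarrow> bool) \<Rightarrow> ('k \<Rightarrow> int \<Rightarrow> 'm) \<Rightarrow> 'k
   \<Rightarrow> ('p \<Rightarrow> int \<Rightarrow> 's \<Rightarrow> bool) \<Rightarrow> real \<Rightarrow> ereal" where
  "zombie_window Dh Wmax eps Vf commit hpk child_ok t_r =
     (SUP t \<in> accepted_times Dh Wmax eps Vf commit hpk child_ok. ereal (t - t_r))"

end

theory Submission
  imports Defs
begin

text \<open>An accepted heartbeat of epoch e must have been signed by the parent at some time
  ts \<le> t_r with e = \<lfloor>ts/Dh\<rfloor>. The freshness check at the verifier's clock reading t + \<delta>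
  bounds the epoch difference by Wmax/Dh, and flooring loses less than one interval,
  so t + \<delta> < ts + Wmax + Dh \<le> t_r + Wmax + Dh; finally \<bar>\<delta>\<bar> \<le> eps.\<close>

lemma epoch_of_diff_le_imp_less:
  assumes "Dh > 0" and "real_of_int (epoch_of Dh t - epoch_of Dh ts) \<le> W / Dh"
  shows "t < ts + W + Dh"
proof -
  have "t / Dh < real_of_int \<lfloor>t / Dh\<rfloor> + 1" by linarith
  moreover have "real_of_int \<lfloor>ts / Dh\<rfloor> \<le> ts / Dh" by linarith
  ultimately have "t / Dh < ts / Dh + W / Dh + 1"
    using assms(2) unfolding epoch_of_def by linarith
  then have "t / Dh < (ts + W + Dh) / Dh"
    using \<open>Dh > 0\<close> by (simp add: add_divide_distrib)
  then show ?thesis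
    using \<open>Dh > 0\<close> by (simp add: divide_less_cancel)
qed

lemma accepted_time_less:
  assumes "Dh > 0"
    and revoked: "\<forall>ts \<in> Gen. ts \<le> t_r"
    and unforgeable: "\<forall>e sh. Vf hpk (commit hpk e) sh \<longrightarrow> (\<exists>ts \<in> Gen. e = epoch_of Dh ts)"
    and accepted: "t \<in> accepted_times Dh Wmax eps Vf commit hpk child_ok"
  shows "t < t_r + Wmax + Dh + eps"
proof -
  obtain delta p e sh where "\<bar>delta\<bar> \<le> eps"
    and fresh: "real_of_int (epoch_of Dh (t + delta) - e) \<le> Wmax / Dh"
    and signed: "Vf hpk (commit hpk e) sh"
    using accepted unfolding accepted_times_def hbhc_accepts_def by blast
  obtain ts where "ts \<in> Gen" and "e = epoch_of Dh ts"
    using unforgeable signed by blast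
  then have "t + delta < ts + Wmax + Dh"
    using epoch_of_diff_le_imp_less[OF \<open>Dh > 0\<close>] fresh by blast
  with \<open>\<bar>delta\<bar> \<le> eps\<close> \<open>ts \<in> Gen\<close> revoked show ?thesis by force
qed

theorem theorem1:
  fixes Dh Wmax eps t_r :: real
    and Gen :: "real set"
    and Vf :: "'k \<Rightarrow> 'm \<Rightarrow> 's \<Rightarrow> bool" and commit :: "'k \<Rightarrow> int \<Rightarrow> 'm" and hpk :: 'k
    and child_ok :: "'p \<Rightarrow> int \<Rightarrow> 's \<Rightarrow> bool"
  assumes "Dh > 0" and "Wmax > 0" and "eps \<ge> 0"
    and revoked: "\<forall>ts \<in> Gen. ts \<le> t_r"
    and unforgeable: "\<forall>e sh. Vf hpk (commit hpk e) sh \<longrightarrow> (\<exists>ts \<in> Gen. e = epoch_of Dh ts)"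
  shows "zombie_window Dh Wmax eps Vf commit hpk child_ok t_r \<le> ereal (Wmax + Dh + eps)"
  unfolding zombie_window_def
proof (rule SUP_least)
  fix t
  assume accepted: "t \<in> accepted_times Dh Wmax eps Vf commit hpk child_ok"
  have "t < t_r + Wmax + Dh + eps"
    using \<open>Dh > 0\<close> revoked unforgeable accepted by (rule accepted_time_less)
  then show "ereal (t - t_r) \<le> ereal (Wmax + Dh + eps)" by simp
qed

end
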